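(* Let $R$ be a commutative ring with identity, $\mathcal S$ an associative $R$-algebra with identity, $\mathcal M$ a $2$-torsion free bimodule over $\mathcal S$, $\delta$ a derivation on $\mathcal S$ and $f:\mathcal S\to\mathcal M$ a bimodule homomorphism over $\mathcal S$. If $D:\mathcal S\to\mathcal M$ is a Jordan $(\delta,f)$-derivation on $\mathcal M$ and $x,y\in\mathcal S$ satisfy $xy=yx$, then $D(xy)=D(x)y+f(x)\delta(y)$.
   Context: A derivation on $\mathcal S$ is an additive map $\delta$ with $\delta(ab)=\delta(a)b+a\delta(b)$. An additive map $D:\mathcal S\to\mathcal M$ is a Jordan $(\delta,f)$-derivation if $D(x^2)=D(x)x+f(x)\delta(x)$ for all $x\in\mathcal S$. $\mathcal M$ is $2$-torsion free if $2m=0$ implies $m=0$. *)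

theory Defs
  imports Main
begin

definition is_algebra :: "('r::comm_ring_1 \<Rightarrow> 's::ring_1 \<Rightarrow> 's) \<Rightarrow> bool" where
  "is_algebra sc \<longleftrightarrow>
     (\<forall>a x y. sc a (x + y) = sc a x + sc a y) \<and>
     (\<forall>a b x. sc (a + b) x = sc a x + sc b x) \<and>
     (\<forall>a b x. sc (a * b) x = sc a (sc b x)) \<and>
     (\<forall>x. sc 1 x = x) \<and>
     (\<forall>a x y. sc a (x * y) = sc a x * y) \<and>
     (\<forall>a x y. sc a (x * y) = x * sc a y)"

definition is_bimodule :: "('s::ring_1 \<Rightarrow> 'm::ab_group_add \<Rightarrow> 'm) \<Rightarrow> ('m \<Rightarrow> 's \<Rightarrow> 'm) \<Rightarrow> bool" where
  "is_bimodule lm rm \<longleftrightarrow>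
     (\<forall>a m n. lm a (m + n) = lm a m + lm a n) \<and>
     (\<forall>a b m. lm (a + b) m = lm a m + lm b m) \<and>
     (\<forall>a b m. lm (a * b) m = lm a (lm b m)) \<and>
     (\<forall>m. lm 1 m = m) \<and>
     (\<forall>a m n. rm (m + n) a = rm m a + rm n a) \<and>
     (\<forall>a b m. rm m (a + b) = rm m a + rm m b) \<and>
     (\<forall>a b m. rm m (a * b) = rm (rm m a) b) \<and>
     (\<forall>m. rm m 1 = m) \<and>
     (\<forall>a b m. rm (lm a m) b = lm a (rm m b))"

definition two_torsion_free :: "'m::ab_group_add itself \<Rightarrow> bool" where
  "two_torsion_free _ \<longleftrightarrow> (\<forall>m::'m. m + m = 0 \<longrightarrow> m = 0)"

definition additive :: "('a::ab_group_add \<Rightarrow> 'b::ab_group_add) \<Rightarrow> bool" where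
  "additive g \<longleftrightarrow> (\<forall>x y. g (x + y) = g x + g y)"

definition is_derivation :: "('s::ring_1 \<Rightarrow> 's) \<Rightarrow> bool" where
  "is_derivation d \<longleftrightarrow> additive d \<and> (\<forall>a b. d (a * b) = d a * b + a * d b)"

definition is_bimodule_hom ::
  "('s::ring_1 \<Rightarrow> 'm::ab_group_add \<Rightarrow> 'm) \<Rightarrow> ('m \<Rightarrow> 's \<Rightarrow> 'm) \<Rightarrow> ('s \<Rightarrow> 'm) \<Rightarrow> bool" where
  "is_bimodule_hom lm rm f \<longleftrightarrow> additive f \<and>
     (\<forall>a x. f (a * x) = lm a (f x)) \<and> (\<forall>x a. f (x * a) = rm (f x) a)"

definition is_jordan_delta_f_derivation ::
  "('m::ab_group_add \<Rightarrow> 's::ring_1 \<Rightarrow> 'm) \<Rightarrow> ('s \<Rightarrow> 's) \<Rightarrow> ('s \<Rightarrow> 'm) \<Rightarrow> ('s \<Rightarrow> 'm) \<Rightarrow> bool" where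
  "is_jordan_delta_f_derivation rm d f D \<longleftrightarrow> additive D \<and>
     (\<forall>x. D (x * x) = rm (D x) x + rm (f x) (d x))"

end

theory Submission
  imports Defs
begin

text \<open>Expanding \<open>D ((b + 1) * (b + 1))\<close> once by the Jordan identity and once by additivity
  (linearising the identity at \<open>b\<close> and \<open>1\<close>), and using \<open>\<delta> 1 = 0\<close>, gives the inner form
  \<open>D b = D(1) b + f(1) \<delta>(b)\<close>. Since a bimodule homomorphism satisfies \<open>f a = f(1) a\<close>, this makes
  \<open>D\<close> a \<open>(\<delta>, f)\<close>-derivation:
  \<open>D(ab) = D(1) ab + f(1) (\<delta>(a) b + a \<delta>(b)) = D(a) b + f(a) \<delta>(b)\<close>.\<close>

lemma is_bimoduleD:
  assumes "is_bimodule lm rm"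
  shows "rm (m + n) a = rm m a + rm n a"
    and "rm m (a + b) = rm m a + rm m b"
    and "rm m (a * b) = rm (rm m a) b"
    and "rm m 1 = m"
    and "rm m 0 = 0"
proof -
  show "rm (m + n) a = rm m a + rm n a"
    and add_right: "\<And>a b. rm m (a + b) = rm m a + rm m b"
    and "rm m (a * b) = rm (rm m a) b" and "rm m 1 = m"
    using assms unfolding is_bimodule_def by auto
  show "rm m 0 = 0"
    using add_right[of 0 0] by simp
qed

lemma derivation_one:
  assumes "is_derivation \<delta>"
  shows "\<delta> 1 = 0"
proof -
  have "\<delta> (1 * 1) = \<delta> 1 * 1 + 1 * \<delta> 1"
    using assms unfolding is_derivation_def by blast
  then show ?thesis
    by simp
qed

lemma bimodule_hom_eq_right_action:
  assumes "is_bimodule_hom lm rm f"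
  shows "f a = rm (f 1) a"
  using assms unfolding is_bimodule_hom_def by (metis mult_1_left)

lemma jordan_delta_f_derivation_inner:
  assumes M: "is_bimodule lm rm"
    and \<delta>: "is_derivation \<delta>"
    and f: "additive f"
    and D: "is_jordan_delta_f_derivation rm \<delta> f D"
  shows "D b = rm (D 1) b + rm (f 1) (\<delta> b)"
proof -
  have D_add: "\<And>a c. D (a + c) = D a + D c"
    and D_sq: "\<And>a. D (a * a) = rm (D a) a + rm (f a) (\<delta> a)"
    using D unfolding is_jordan_delta_f_derivation_def additive_def by auto
  have \<delta>_add: "\<And>a c. \<delta> (a + c) = \<delta> a + \<delta> c"
    using \<delta> unfolding is_derivation_def additive_def by auto
  have f_add: "\<And>a c. f (a + c) = f a + f c"
    using f unfolding additive_def by auto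
  note rm = is_bimoduleD[OF M] and \<delta>_one = derivation_one[OF \<delta>]
  have "rm (D b) b + rm (f b) (\<delta> b) + D b + D b + D 1 = D (b * b) + D b + D b + D 1"
    by (simp add: D_sq)
  also have "\<dots> = D ((b + 1) * (b + 1))"
    by (simp add: distrib_left distrib_right D_add add.assoc)
  also have "\<dots> = rm (D (b + 1)) (b + 1) + rm (f (b + 1)) (\<delta> (b + 1))"
    by (rule D_sq)
  also have "\<dots> = rm (D b) b + rm (f b) (\<delta> b) + D b + (rm (D 1) b + rm (f 1) (\<delta> b)) + D 1"
    by (simp add: D_add f_add \<delta>_add rm \<delta>_one add_ac)
  finally show ?thesis
    by simp
qed

lemma jordan_delta_f_derivation_is_delta_f_derivation:
  assumes M: "is_bimodule lm rm"
    and \<delta>: "is_derivation \<delta>"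
    and f: "is_bimodule_hom lm rm f"
    and D: "is_jordan_delta_f_derivation rm \<delta> f D"
  shows "D (a * b) = rm (D a) b + rm (f a) (\<delta> b)"
proof -
  have inner: "\<And>c. D c = rm (D 1) c + rm (f 1) (\<delta> c)"
    using f jordan_delta_f_derivation_inner[OF M \<delta> _ D]
    unfolding is_bimodule_hom_def by blast
  note rm = is_bimoduleD[OF M]
  have "D (a * b) = rm (D 1) (a * b) + rm (f 1) (\<delta> a * b + a * \<delta> b)"
    using inner[of "a * b"] \<delta> unfolding is_derivation_def by simp
  also have "\<dots> = rm (rm (D 1) a + rm (f 1) (\<delta> a)) b + rm (rm (f 1) a) (\<delta> b)"
    by (simp add: rm)
  also have "\<dots> = rm (D a) b + rm (f a) (\<delta> b)"
    by (simp only: inner[of a] bimodule_hom_eq_right_action[OF f, of a])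
  finally show ?thesis .
qed

theorem lemma3p9:
  fixes sc :: "'r::comm_ring_1 \<Rightarrow> 's::ring_1 \<Rightarrow> 's"
    and lm :: "'s \<Rightarrow> 'm::ab_group_add \<Rightarrow> 'm"
    and rm :: "'m \<Rightarrow> 's \<Rightarrow> 'm"
    and \<delta> :: "'s \<Rightarrow> 's"
    and f D :: "'s \<Rightarrow> 'm"
    and x y :: 's
  assumes "is_algebra sc"
    and "is_bimodule lm rm"
    and "two_torsion_free TYPE('m)"
    and "is_derivation \<delta>"
    and "is_bimodule_hom lm rm f"
    and "is_jordan_delta_f_derivation rm \<delta> f D"
    and "x * y = y * x"
  shows "D (x * y) = rm (D x) y + rm (f x) (\<delta> y)"
  using assms(2,4-6) by (rule jordan_delta_f_derivation_is_delta_f_derivation)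

end
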